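(* Let $\mathcal{A}=\{f\in C^\infty(]0,1[,]0,1[)\mid \lim_{x\to1}f(x)=1,\ \lim_{x\to0}f(x)=0\}$ and $\mathcal{D}=\{f\in\mathcal{A}\mid \inf_{x\in]0,1[}f'(x)>0 \text{ and } \sup_{x\in]0,1[}f'(x)>0\}$. Let $P\in\mathbb{R}[x]$ be a polynomial with $P(0)=P(1)=0$, $0<P(x)<\min(x,1-x)$ for all $x\in]0,1[$, and $\sup_{x\in]0,1[}|P'(x)|<1$. Define $\varphi(t,x)=\frac{P(x)t}{(1-P(x))t+P(x)}$ and $c_t(x)=x+\varphi(t,x)$ for $t\ge0$, $c_t(x)=x-\varphi(-t,x)$ for $t<0$. Then $c_t\in\mathcal{D}$ for all $t\in[0,1]$. *)

theory Defs
  imports "HOL-Analysis.Analysis" "HOL-Computational_Algebra.Polynomial"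
begin

definition smooth_on :: "real set \<Rightarrow> (real \<Rightarrow> real) \<Rightarrow> bool" where
  "smooth_on S f \<longleftrightarrow> (\<forall>n. \<forall>x\<in>S. ((deriv ^^ n) f) differentiable (at x))"

definition classA :: "(real \<Rightarrow> real) set" where
  "classA = {f. smooth_on {0<..<1} f \<and> (\<forall>x\<in>{0<..<1}. f x \<in> {0<..<1})
               \<and> (f \<longlongrightarrow> 1) (at_left 1) \<and> (f \<longlongrightarrow> 0) (at_right 0)}"

definition classD :: "(real \<Rightarrow> real) set" where
  "classD = {f \<in> classA. (INF x\<in>{0<..<1}. ereal (deriv f x)) > 0
                       \<and> (SUP x\<in>{0<..<1}. ereal (deriv f x)) > 0}"

definition phi :: "real poly \<Rightarrow> real \<Rightarrow> real \<Rightarrow> real" where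
  "phi P t x = poly P x * t / ((1 - poly P x) * t + poly P x)"

definition cfun :: "real poly \<Rightarrow> real \<Rightarrow> real \<Rightarrow> real" where
  "cfun P t x = (if t \<ge> 0 then x + phi P t x else x - phi P (-t) x)"

end

theory Submission
  imports Defs
begin

text \<open>For \<open>0 \<le> t \<le> 1\<close> we have \<open>\<phi>(t,x) = P(x) t / D(x)\<close> with \<open>D = t + (1 - t) P\<close>, and \<open>D > 0\<close>
  on \<open>]0,1[\<close>. Hence \<open>c\<^sub>t\<close> is a rational function without poles there, so it is smooth;
  \<open>D \<ge> t\<close> gives \<open>0 \<le> \<phi>(t,x) \<le> P(x)\<close>, which squeezes \<open>c\<^sub>t\<close> between \<open>x\<close> and \<open>x + P(x) < 1\<close>, giving
  the range and the boundary limits; and \<open>c\<^sub>t' = 1 + (t/D)\<^sup>2 P' \<ge> 1 - sup |P'| > 0\<close>.\<close>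

lemma has_real_derivative_poly_quotient_power:
  fixes B D :: "real poly"
  assumes "poly D x \<noteq> 0"
  shows "((\<lambda>x. poly B x / poly D x ^ k) has_real_derivative
     poly (pderiv B * D - smult (of_nat k) (B * pderiv D)) x / poly D x ^ Suc k) (at x)"
proof -
  have "((\<lambda>x. poly B x / poly D x ^ k) has_real_derivative
     (poly (pderiv B) x * poly D x ^ k - (of_nat k * (poly (pderiv D) x * poly D x ^ (k - Suc 0))) * poly B x)
       / (poly D x ^ k) ^ Suc (Suc 0)) (at x)"
    by (rule DERIV_quotient[OF poly_DERIV DERIV_power[OF poly_DERIV]]) (use assms in simp)
  moreover have "(poly (pderiv B) x * poly D x ^ k - (of_nat k * (poly (pderiv D) x * poly D x ^ (k - Suc 0))) * poly B x)
       / (poly D x ^ k) ^ Suc (Suc 0) = poly (pderiv B * D - smult (of_nat k) (B * pderiv D)) x / poly D x ^ Suc k"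
    using assms by (cases k) (simp_all add: field_simps power2_eq_square)
  ultimately show ?thesis by simp
qed

lemma higher_deriv_poly_quotient_power:
  fixes B D :: "real poly"
  assumes "open U" and "\<forall>x\<in>U. poly D x \<noteq> 0" and "\<forall>x\<in>U. g x = poly B x / poly D x ^ k"
  shows "\<exists>B' k'. \<forall>x\<in>U. (deriv ^^ n) g x = poly B' x / poly D x ^ k'"
proof (induction n)
  case 0
  then show ?case using assms(3) by auto
next
  case (Suc n)
  then obtain B' k' where IH: "\<forall>x\<in>U. (deriv ^^ n) g x = poly B' x / poly D x ^ k'" by blast
  have "(deriv ^^ Suc n) g x = poly (pderiv B' * D - smult (of_nat k') (B' * pderiv D)) x / poly D x ^ Suc k'"
    if "x \<in> U" for x
    using has_field_derivative_transform_within_open[OF has_real_derivative_poly_quotient_power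
        \<open>open U\<close> \<open>x \<in> U\<close>] assms(2) IH that
    by (auto intro: DERIV_imp_deriv)
  then show ?case by blast
qed

lemma smooth_on_poly_quotient_power:
  fixes B D :: "real poly"
  assumes "open U" and "\<forall>x\<in>U. poly D x \<noteq> 0" and "\<forall>x\<in>U. g x = poly B x / poly D x ^ k"
  shows "smooth_on U g"
  unfolding smooth_on_def
proof (intro allI ballI)
  fix n x assume "x \<in> U"
  obtain B' k' where "\<forall>x\<in>U. (deriv ^^ n) g x = poly B' x / poly D x ^ k'"
    using higher_deriv_poly_quotient_power[OF assms] by blast
  then have "((deriv ^^ n) g has_real_derivative
      poly (pderiv B' * D - smult (of_nat k') (B' * pderiv D)) x / poly D x ^ Suc k') (at x)"
    using has_field_derivative_transform_within_open[OF has_real_derivative_poly_quotient_power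
        \<open>open U\<close> \<open>x \<in> U\<close>] assms(2) \<open>x \<in> U\<close> by auto
  then show "(deriv ^^ n) g differentiable at x"
    by (auto simp: real_differentiable_def)
qed

lemma tendsto_squeeze_ident_plus_poly:
  fixes P :: "real poly" and F :: "real filter"
  assumes "\<forall>\<^sub>F x in F. x \<le> f x \<and> f x \<le> x + poly P x"
    and "((\<lambda>x. x) \<longlongrightarrow> a) F" and "poly P a = 0"
  shows "(f \<longlongrightarrow> a) F"
proof (rule tendsto_sandwich[of "\<lambda>x. x" _ _ "\<lambda>x. x + poly P x"])
  have "((\<lambda>x. x + poly P x) \<longlongrightarrow> a + poly P a) F"
    by (intro tendsto_add assms(2) tendsto_poly)
  then show "((\<lambda>x. x + poly P x) \<longlongrightarrow> a) F" using assms(3) by simp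
qed (use assms(1) in \<open>auto elim: eventually_mono intro: assms(2)\<close>)

definition phi_denom :: "real poly \<Rightarrow> real \<Rightarrow> real poly" where
  "phi_denom P t = [:t:] + smult (1 - t) P"

lemma phi_eq_quotient: "phi P t x = poly P x * t / poly (phi_denom P t) x"
  unfolding phi_def phi_denom_def by (simp add: algebra_simps)

lemma phi_denom_pos:
  assumes "0 \<le> t" "t \<le> 1" "0 < poly P x"
  shows "0 < poly (phi_denom P t) x"
  using assms unfolding phi_denom_def
  by (cases "t = 0") (auto intro: add_pos_nonneg)

lemma phi_denom_ge:
  assumes "0 \<le> t" "t \<le> 1" "0 \<le> poly P x"
  shows "t \<le> poly (phi_denom P t) x" and "poly P x * t \<le> poly P x * poly (phi_denom P t) x"
proof -
  have "0 \<le> (1 - t) * poly P x" using assms by simp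
  then show "t \<le> poly (phi_denom P t) x" unfolding phi_denom_def by simp
  then show "poly P x * t \<le> poly P x * poly (phi_denom P t) x"
    using assms(3) by (rule mult_left_mono)
qed

lemma phi_bounds:
  assumes "0 \<le> t" "t \<le> 1" "0 < poly P x"
  shows "0 \<le> phi P t x" and "phi P t x \<le> poly P x"
  using phi_denom_pos[OF assms] phi_denom_ge(2)[of t P x] assms
  by (auto simp: phi_eq_quotient divide_le_eq)

lemma phi_has_real_derivative:
  assumes "poly (phi_denom P t) x \<noteq> 0"
  shows "(phi P t has_real_derivative (t / poly (phi_denom P t) x)\<^sup>2 * poly (pderiv P) x) (at x)"
proof -
  have "((\<lambda>x. poly P x * t / poly (phi_denom P t) x) has_real_derivative
      (poly (pderiv P) x * t * poly (phi_denom P t) x - poly (pderiv (phi_denom P t)) x * (poly P x * t))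
        / (poly (phi_denom P t) x)\<^sup>2) (at x)"
    using assms by (auto intro!: derivative_eq_intros simp: power2_eq_square)
  moreover have "pderiv (phi_denom P t) = smult (1 - t) (pderiv P)"
    unfolding phi_denom_def by (simp add: pderiv_add pderiv_smult pderiv_pCons)
  ultimately show ?thesis
    using assms unfolding phi_eq_quotient[abs_def]
    by (simp add: field_simps power2_eq_square) (simp add: phi_denom_def algebra_simps)
qed

lemma cfun_nonneg_eq: "0 \<le> t \<Longrightarrow> cfun P t = (\<lambda>x. x + phi P t x)"
  unfolding cfun_def by simp

lemma deriv_cfun_ge:
  assumes "0 \<le> t" "t \<le> 1" "0 < poly P x" and "\<bar>poly (pderiv P) x\<bar> \<le> s"
  shows "1 - s \<le> deriv (cfun P t) x"
proof -
  define q where "q = t / poly (phi_denom P t) x"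
  have denom: "0 < poly (phi_denom P t) x" using phi_denom_pos[OF assms(1-3)] .
  have "(cfun P t has_real_derivative 1 + q\<^sup>2 * poly (pderiv P) x) (at x)"
    unfolding cfun_nonneg_eq[OF assms(1)] q_def
    using denom by (auto intro!: derivative_eq_intros phi_has_real_derivative)
  then have deriv_eq: "deriv (cfun P t) x = 1 + q\<^sup>2 * poly (pderiv P) x"
    by (rule DERIV_imp_deriv)
  have "0 \<le> q" "q \<le> 1"
    using assms phi_denom_ge(1)[of t P x] denom by (auto simp: q_def divide_le_eq)
  then have "\<bar>q\<^sup>2 * poly (pderiv P) x\<bar> \<le> \<bar>poly (pderiv P) x\<bar>"
    by (simp add: abs_mult power_le_one mult_left_le_one_le)
  then show ?thesis using deriv_eq assms(4) by linarith
qed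

lemma ereal_SUP_less_obtain_bound:
  fixes f :: "'a \<Rightarrow> real"
  assumes "S \<noteq> {}" and "(SUP x\<in>S. ereal (f x)) < ereal c"
  obtains s where "s < c" and "\<And>x. x \<in> S \<Longrightarrow> f x \<le> s"
proof -
  obtain x0 where "x0 \<in> S" using assms(1) by blast
  then have "ereal (f x0) \<le> (SUP x\<in>S. ereal (f x))" by (rule SUP_upper)
  then obtain s where s: "(SUP x\<in>S. ereal (f x)) = ereal s"
    using assms(2) by (cases "SUP x\<in>S. ereal (f x)") auto
  have "f x \<le> s" if "x \<in> S" for x
    using SUP_upper[OF that, of "\<lambda>x. ereal (f x)"] s by simp
  then show ?thesis using that assms(2) s by simp
qed

lemma cfun_in_classA:
  fixes P :: "real poly"
  assumes "poly P 0 = 0" and "poly P 1 = 0"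
    and "\<forall>x\<in>{0<..<1}. 0 < poly P x \<and> poly P x < min x (1 - x)"
    and "0 \<le> t" "t \<le> 1"
  shows "cfun P t \<in> classA"
proof -
  let ?U = "{0<..<1::real}"
  have denom: "\<forall>x\<in>?U. poly (phi_denom P t) x \<noteq> 0"
    using phi_denom_pos assms(3-5) by (metis less_irrefl)
  have "\<forall>x\<in>?U. cfun P t x = poly ([:0, 1:] * phi_denom P t + smult t P) x / poly (phi_denom P t) x ^ 1"
    using denom by (simp add: cfun_nonneg_eq[OF assms(4)] phi_eq_quotient field_simps)
  then have smooth: "smooth_on ?U (cfun P t)"
    by (rule smooth_on_poly_quotient_power[OF open_greaterThanLessThan denom])
  have squeeze: "x \<le> cfun P t x \<and> cfun P t x \<le> x + poly P x" if "x \<in> ?U" for x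
    using phi_bounds[OF assms(4,5)] assms(3) that by (simp add: cfun_nonneg_eq[OF assms(4)])
  have range: "\<forall>x\<in>?U. cfun P t x \<in> ?U"
  proof
    fix x assume "x \<in> ?U"
    then have "poly P x < 1 - x" using assms(3) by auto
    then show "cfun P t x \<in> ?U" using squeeze[OF \<open>x \<in> ?U\<close>] \<open>x \<in> ?U\<close> by auto
  qed
  have "\<forall>\<^sub>F x in at_left 1. x \<le> cfun P t x \<and> cfun P t x \<le> x + poly P x"
    using eventually_at_left_real[of 0 1] by (auto elim!: eventually_mono simp: squeeze)
  then have lim1: "(cfun P t \<longlongrightarrow> 1) (at_left 1)"
    by (rule tendsto_squeeze_ident_plus_poly[OF _ tendsto_ident_at assms(2)])
  have "\<forall>\<^sub>F x in at_right 0. x \<le> cfun P t x \<and> cfun P t x \<le> x + poly P x"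
    using eventually_at_right_real[of 0 1] by (auto elim!: eventually_mono simp: squeeze)
  then have lim0: "(cfun P t \<longlongrightarrow> 0) (at_right 0)"
    by (rule tendsto_squeeze_ident_plus_poly[OF _ tendsto_ident_at assms(1)])
  show ?thesis unfolding classA_def using smooth range lim0 lim1 by blast
qed

theorem lemma8p3:
  fixes P :: "real poly"
  assumes "poly P 0 = 0" and "poly P 1 = 0"
    and "\<forall>x\<in>{0<..<1}. 0 < poly P x \<and> poly P x < min x (1 - x)"
    and "(SUP x\<in>{0<..<1::real}. ereal \<bar>poly (pderiv P) x\<bar>) < 1"
  shows "\<forall>t\<in>{0..1::real}. cfun P t \<in> classD"
proof
  fix t :: real assume t: "t \<in> {0..1}"
  obtain s where "s < 1" and s: "\<And>x. x \<in> {0<..<1} \<Longrightarrow> \<bar>poly (pderiv P) x\<bar> \<le> s"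
    using ereal_SUP_less_obtain_bound[of "{0<..<1::real}" "\<lambda>x. \<bar>poly (pderiv P) x\<bar>" 1] assms(4)
    by (auto simp: one_ereal_def)
  have "ereal (1 - s) \<le> (INF x\<in>{0<..<1}. ereal (deriv (cfun P t) x))"
    using deriv_cfun_ge s t assms(3) by (auto intro!: INF_greatest)
  then have "0 < (INF x\<in>{0<..<1::real}. ereal (deriv (cfun P t) x))"
    using \<open>s < 1\<close> by (metis diff_gt_0_iff_gt ereal_less(2) less_le_trans)
  moreover have "(INF x\<in>{0<..<1::real}. ereal (deriv (cfun P t) x))
      \<le> (SUP x\<in>{0<..<1}. ereal (deriv (cfun P t) x))"
    by (rule INF_le_SUP) simp
  ultimately show "cfun P t \<in> classD"
    using cfun_in_classA[OF assms(1-3)] t unfolding classD_def by auto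
qed

end
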